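(* Let $R,W,Q$ be symmetric BIDMCs and $p\in(0,1)$. If $pR+(1-p)W\preccurlyeq pR+(1-p)Q$, then $W\preccurlyeq Q$.
   Context: A binary-input discrete memoryless channel (BIDMC) $W$ has input $x$ uniformly distributed on $\{0,1\}$, a discrete output alphabet and transition probabilities $\Pr(y\mid x)$. Its LR-profile is $P_W(\varepsilon)=\Pr\big(\mathcal L_W(y)=\varepsilon/(1-\varepsilon)\big)$, where $\mathcal L_W(\hat y)=\Pr(y=\hat y\mid x=0)/\Pr(y=\hat y\mid x=1)$; $W\cong W'$ if their LR-profiles coincide. $W'\preccurlyeq W$ ($W'$ is a degradation of $W$) if there is a channel $T$ from the output alphabet $\mathcal Y$ of $W$ to that of $W'$ with $\Pr(y'\mid x'=a)=\sum_{y\in\mathcal Y}\Pr(y\mid x=a)T(y'\mid y)$, $a\in\{0,1\}$. For BIDMCs $W_1,W_2$ and $p\in[0,1]$, $pW_1+(1-p)W_2$ is the random switching channel that, with probability $p$ (resp. $1-p$), independently of the input, sends the input through $W_1$ (resp. $W_2$) and outputs the channel output together with the index of the channel used. A BIDMC is symmetric if $P_W(\varepsilon)=P_W(1-\varepsilon)$ for all $\varepsilon\in[0,1]$. *)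

theory Defs
  imports "HOL-Probability.Probability"
begin

text \<open>A binary-input channel with output type 'y: input bit a (False = 0, True = 1)
  is mapped to the output distribution Pr(y | x = a).\<close>
type_synonym 'y channel = "bool \<Rightarrow> 'y pmf"

definition bidmc :: "'y channel \<Rightarrow> bool" where
  "bidmc W \<longleftrightarrow> finite (set_pmf (W False)) \<and> finite (set_pmf (W True))"

definition LR :: "'y channel \<Rightarrow> 'y \<Rightarrow> ereal" where
  "LR W y = (if pmf (W True) y = 0 then \<infinity> else ereal (pmf (W False) y / pmf (W True) y))"

definition eps_ratio :: "real \<Rightarrow> ereal" where
  "eps_ratio e = (if e = 1 then \<infinity> else ereal (e / (1 - e)))"

definition out_prob :: "'y channel \<Rightarrow> 'y set \<Rightarrow> real" where
  "out_prob W A = (measure_pmf.prob (W False) A + measure_pmf.prob (W True) A) / 2"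

definition LR_profile :: "'y channel \<Rightarrow> real \<Rightarrow> real" where
  "LR_profile W e = out_prob W {y. LR W y = eps_ratio e}"

definition symmetric_channel :: "'y channel \<Rightarrow> bool" where
  "symmetric_channel W \<longleftrightarrow> (\<forall>e\<in>{0..1}. LR_profile W e = LR_profile W (1 - e))"

definition degraded :: "'z channel \<Rightarrow> 'y channel \<Rightarrow> bool" where
  "degraded W' W \<longleftrightarrow> (\<exists>T :: 'y \<Rightarrow> 'z pmf. \<forall>a. W' a = bind_pmf (W a) T)"

text \<open>Random switching channel p W1 + (1-p) W2; the output records which channel was used
  (Inl for W1, Inr for W2).\<close>
definition switch_channel :: "real \<Rightarrow> 'y channel \<Rightarrow> 'z channel \<Rightarrow> ('y + 'z) channel" where
  "switch_channel p W1 W2 a =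
     bind_pmf (bernoulli_pmf p) (\<lambda>b. if b then map_pmf Inl (W1 a) else map_pmf Inr (W2 a))"

end

theory Submission
  imports Defs
begin

text \<open>Blackwell's comparison of experiments: \<open>W \<preccurlyeq> Q\<close> iff for every decision problem
  (finitely many actions, payoffs depending on action and input) the optimal expected payoff when
  observing \<open>W\<close> is at most that when observing \<open>Q\<close>; actions indexed by the outputs of \<open>W\<close>
  suffice. The optimal payoff of a random switching channel is the corresponding convex combination of
  the optimal payoffs of its components, so the contribution of \<open>R\<close> cancels and the hypothesis
  gives the payoff inequality for \<open>W\<close> and \<open>Q\<close>.

  For the sufficiency half of Blackwell's theorem, minimise the squared distance from \<open>W\<close> to the
  compact convex set of channels obtained by post-processing \<open>Q\<close> with a stochastic kernel. If the
  minimum is positive, the first-order optimality condition shows that the residual at the minimiser,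
  read as a payoff, is a decision problem in which \<open>W\<close> does strictly better than \<open>Q\<close>.\<close>

definition output_support :: "'y channel \<Rightarrow> 'y set" where
  "output_support V = set_pmf (V False) \<union> set_pmf (V True)"

text \<open>A decision problem is given by a set \<open>Z\<close> of actions and payoffs \<open>c z a\<close> for action \<open>z\<close>
  at input \<open>a\<close>. The payoff of \<open>z\<close> at output \<open>y\<close> is weighted by \<open>Pr(y | a)\<close>; the factor 1/2 of the
  uniform input prior is dropped throughout.\<close>

definition payoff :: "('z \<Rightarrow> bool \<Rightarrow> real) \<Rightarrow> 'z \<Rightarrow> 'y channel \<Rightarrow> 'y \<Rightarrow> real" where
  "payoff c z V y = (\<Sum>a\<in>UNIV. c z a * pmf (V a) y)"

definition best_payoff :: "('z \<Rightarrow> bool \<Rightarrow> real) \<Rightarrow> 'z set \<Rightarrow> 'y channel \<Rightarrow> 'y \<Rightarrow> real" where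
  "best_payoff c Z V y = Max ((\<lambda>z. payoff c z V y) ` Z)"

definition bayes_payoff :: "('z \<Rightarrow> bool \<Rightarrow> real) \<Rightarrow> 'z set \<Rightarrow> 'y channel \<Rightarrow> real" where
  "bayes_payoff c Z V = (\<Sum>y\<in>output_support V. best_payoff c Z V y)"

lemma bidmc_iff_finite_output_support: "bidmc V \<longleftrightarrow> finite (output_support V)"
  by (simp add: bidmc_def output_support_def)

lemma set_pmf_subset_output_support: "set_pmf (V a) \<subseteq> output_support V"
  by (cases a) (auto simp: output_support_def)

lemma output_support_nonempty: "output_support V \<noteq> {}"
  using set_pmf_not_empty[of "V False"] by (auto simp: output_support_def)

lemma pmf_outside_output_support: "y \<notin> output_support V \<Longrightarrow> pmf (V a) y = 0"
  using set_pmf_subset_output_support by (metis pmf_eq_0_set_pmf subsetD)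

lemma best_payoff_ge: "finite Z \<Longrightarrow> z \<in> Z \<Longrightarrow> payoff c z V y \<le> best_payoff c Z V y"
  unfolding best_payoff_def by (intro Max_ge) auto

lemma best_payoff_outside_output_support:
  "Z \<noteq> {} \<Longrightarrow> y \<notin> output_support V \<Longrightarrow> best_payoff c Z V y = 0"
  by (simp add: best_payoff_def payoff_def pmf_outside_output_support image_constant_conv)

lemma sum_best_payoff_superset:
  assumes "finite S" "output_support V \<subseteq> S" "Z \<noteq> {}"
  shows "(\<Sum>y\<in>S. best_payoff c Z V y) = bayes_payoff c Z V"
  unfolding bayes_payoff_def using assms
  by (intro sum.mono_neutral_right) (auto simp: best_payoff_outside_output_support)

lemma pmf_bind_finite_support:
  assumes "finite S" "set_pmf M \<subseteq> S"
  shows "pmf (bind_pmf M f) x = (\<Sum>y\<in>S. pmf M y * pmf (f y) x)"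
  unfolding pmf_bind using assms by (subst integral_measure_pmf[of S]) auto

lemma bayes_payoff_degraded:
  assumes "bidmc V" "bidmc V'" "finite Z" "Z \<noteq> {}" "degraded V' V"
  shows "bayes_payoff c Z V' \<le> bayes_payoff c Z V"
proof -
  define S S' where "S = output_support V" and "S' = output_support V'"
  have S: "finite S" "finite S'"
    using assms(1,2) by (simp_all add: S_def S'_def bidmc_iff_finite_output_support)
  obtain T where T: "\<And>a. V' a = bind_pmf (V a) T"
    using assms(5) unfolding degraded_def by blast
  have payoff_V': "payoff c z V' w = (\<Sum>y\<in>S. pmf (T y) w * payoff c z V y)" for z w
  proof -
    have "pmf (V' a) w = (\<Sum>y\<in>S. pmf (V a) y * pmf (T y) w)" for a
      using S(1) unfolding T S_def by (intro pmf_bind_finite_support set_pmf_subset_output_support)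
    then show ?thesis
      unfolding payoff_def
      by (simp add: sum.swap[of _ S] sum_distrib_left sum_distrib_right algebra_simps)
  qed
  have best_V': "best_payoff c Z V' w \<le> (\<Sum>y\<in>S. pmf (T y) w * best_payoff c Z V y)" for w
    unfolding best_payoff_def[of c Z V'] using assms(1,3,4)
    by (auto simp: payoff_V' bidmc_iff_finite_output_support
        intro!: Max.boundedI sum_mono mult_left_mono best_payoff_ge)
  have T_total: "(\<Sum>w\<in>S'. pmf (T y) w) = 1" if "y \<in> S" for y
  proof -
    obtain a where "y \<in> set_pmf (V a)" using \<open>y \<in> S\<close> unfolding S_def output_support_def by auto
    then have "set_pmf (T y) \<subseteq> S'"
      using set_pmf_subset_output_support[of V' a] unfolding S'_def T by auto
    then show ?thesis using S by (intro sum_pmf_eq_1) auto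
  qed
  have "bayes_payoff c Z V' \<le> (\<Sum>w\<in>S'. \<Sum>y\<in>S. pmf (T y) w * best_payoff c Z V y)"
    unfolding bayes_payoff_def S'_def by (intro sum_mono best_V')
  also have "\<dots> = (\<Sum>y\<in>S. (\<Sum>w\<in>S'. pmf (T y) w) * best_payoff c Z V y)"
    by (subst sum.swap) (simp add: sum_distrib_right)
  also have "\<dots> = bayes_payoff c Z V"
    unfolding bayes_payoff_def S_def by (intro sum.cong) (auto simp: T_total S_def)
  finally show ?thesis .
qed

lemma output_support_switch_channel:
  "output_support (switch_channel p R V) \<subseteq> Inl ` output_support R \<union> Inr ` output_support V"
  unfolding output_support_def switch_channel_def by (auto split: if_splits)

lemma bidmc_switch_channel: "bidmc R \<Longrightarrow> bidmc V \<Longrightarrow> bidmc (switch_channel p R V)"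
  using output_support_switch_channel
  by (metis bidmc_iff_finite_output_support finite_Un finite_imageI finite_subset)

lemma pmf_switch_channel:
  assumes "0 \<le> p" "p \<le> 1"
  shows "pmf (switch_channel p R V a) (Inl y) = p * pmf (R a) y"
    and "pmf (switch_channel p R V a) (Inr z) = (1 - p) * pmf (V a) z"
proof -
  have pmf_switch: "pmf (switch_channel p R V a) x =
     p * pmf (map_pmf Inl (R a)) x + (1 - p) * pmf (map_pmf Inr (V a)) x" for x
    unfolding switch_channel_def pmf_bind using assms
    by (subst integral_measure_pmf[of UNIV]) (auto simp: UNIV_bool)
  show "pmf (switch_channel p R V a) (Inl y) = p * pmf (R a) y"
       "pmf (switch_channel p R V a) (Inr z) = (1 - p) * pmf (V a) z"
    unfolding pmf_switch by (simp_all add: pmf_map_inj' pmf_eq_0_set_pmf image_iff)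
qed

lemma best_payoff_scale:
  assumes "0 \<le> q" "finite Z" "Z \<noteq> {}" "\<And>a. pmf (V' a) y' = q * pmf (V a) y"
  shows "best_payoff c Z V' y' = q * best_payoff c Z V y"
proof -
  have "payoff c z V' y' = q * payoff c z V y" for z
    unfolding payoff_def assms(4) by (simp add: sum_distrib_left algebra_simps)
  moreover have "mono ((*) q)" using assms(1) by (intro monoI mult_left_mono)
  ultimately show ?thesis
    unfolding best_payoff_def using assms(2,3) mono_Max_commute[of "(*) q"]
    by (simp add: image_image)
qed

lemma bayes_payoff_switch_channel:
  assumes "0 \<le> p" "p \<le> 1" "bidmc R" "bidmc V" "finite Z" "Z \<noteq> {}"
  shows "bayes_payoff c Z (switch_channel p R V) =
    p * bayes_payoff c Z R + (1 - p) * bayes_payoff c Z V"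
proof -
  let ?RV = "switch_channel p R V"
  have fin: "finite (output_support R)" "finite (output_support V)"
    using assms(3,4) by (simp_all add: bidmc_iff_finite_output_support)
  have "bayes_payoff c Z ?RV =
      (\<Sum>y\<in>Inl ` output_support R \<union> Inr ` output_support V. best_payoff c Z ?RV y)"
    using fin assms(6)
    by (intro sum_best_payoff_superset[symmetric] output_support_switch_channel) auto
  also have "\<dots> =
      (\<Sum>y\<in>Inl ` output_support R. best_payoff c Z ?RV y) +
      (\<Sum>y\<in>Inr ` output_support V. best_payoff c Z ?RV y)"
    using fin by (intro sum.union_disjoint) auto
  also have "\<dots> = p * bayes_payoff c Z R + (1 - p) * bayes_payoff c Z V"
    using assms by (simp add: sum.reindex bayes_payoff_def sum_distrib_left
        best_payoff_scale[OF _ _ _ pmf_switch_channel(1)]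
        best_payoff_scale[OF _ _ _ pmf_switch_channel(2)])
  finally show ?thesis .
qed

lemmas continuous_on_coordinate [continuous_intros] =
  continuous_on_product_then_coordinatewise[OF continuous_on_id]

text \<open>Kernels are total functions on pairs, vanishing outside \<open>Y \<times> Z\<close>, so that they form a
  compact set in the product topology even when the type of \<open>Y\<close> is infinite.\<close>

definition stochastic_kernels :: "'y set \<Rightarrow> 'z set \<Rightarrow> ('y \<times> 'z \<Rightarrow> real) set" where
  "stochastic_kernels Y Z =
     {T. (\<forall>i. 0 \<le> T i) \<and> (\<forall>i. i \<notin> Y \<times> Z \<longrightarrow> T i = 0) \<and> (\<forall>y\<in>Y. (\<Sum>z\<in>Z. T (y, z)) = 1)}"

definition kernel_output :: "'y channel \<Rightarrow> 'y set \<Rightarrow> ('y \<times> 'z \<Rightarrow> real) \<Rightarrow> bool \<Rightarrow> 'z \<Rightarrow> real" where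
  "kernel_output Q Y T a z = (\<Sum>y\<in>Y. pmf (Q a) y * T (y, z))"

definition deterministic_kernel :: "'y set \<Rightarrow> ('y \<Rightarrow> 'z) \<Rightarrow> 'y \<times> 'z \<Rightarrow> real" where
  "deterministic_kernel Y f = (\<lambda>(y, z). if y \<in> Y \<and> z = f y then 1 else 0)"

lemma deterministic_kernel_in_stochastic_kernels:
  "finite Z \<Longrightarrow> f ` Y \<subseteq> Z \<Longrightarrow> deterministic_kernel Y f \<in> stochastic_kernels Y Z"
  by (auto simp: stochastic_kernels_def deterministic_kernel_def)

lemma stochastic_kernels_convex:
  assumes "T \<in> stochastic_kernels Y Z" "T' \<in> stochastic_kernels Y Z" "0 \<le> t" "t \<le> 1"
  shows "(\<lambda>i. T i + t * (T' i - T i)) \<in> stochastic_kernels Y Z"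
proof -
  have "0 \<le> (1 - t) * T i + t * T' i" for i
    using assms by (cases i) (simp add: stochastic_kernels_def)
  moreover have "(\<Sum>z\<in>Z. T (y, z) + t * (T' (y, z) - T (y, z))) = 1" if "y \<in> Y" for y
    using assms that
    by (simp add: stochastic_kernels_def sum.distrib sum_subtractf sum_distrib_left[symmetric])
  ultimately show ?thesis
    using assms by (simp add: stochastic_kernels_def algebra_simps)
qed

lemma stochastic_kernels_le_1:
  assumes "finite Z" "T \<in> stochastic_kernels Y Z"
  shows "T i \<le> 1"
proof (cases "i \<in> Y \<times> Z")
  case True
  then obtain y z where yz: "i = (y, z)" "y \<in> Y" "z \<in> Z" by blast
  then have "T (y, z) \<le> (\<Sum>z'\<in>Z. T (y, z'))"
    using assms by (intro member_le_sum) (auto simp: stochastic_kernels_def)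
  then show ?thesis using assms yz by (simp add: stochastic_kernels_def)
next
  case False
  then show ?thesis using assms by (cases i) (simp add: stochastic_kernels_def)
qed

lemma compact_stochastic_kernels:
  assumes "finite Z"
  shows "compact (stochastic_kernels Y Z)"
proof -
  define B where "B = PiE UNIV (\<lambda>i. if i \<in> Y \<times> Z then {0..1::real} else {0})"
  have "compactin (product_topology (\<lambda>_. euclidean) UNIV) B"
    unfolding B_def compactin_PiE by auto
  then have "compact B" by (simp add: euclidean_product_topology)
  moreover have "closed (stochastic_kernels Y Z)"
    unfolding stochastic_kernels_def Ball_def
    by (intro closed_Collect_conj closed_Collect_all closed_Collect_imp closed_Collect_le
        closed_Collect_eq open_Collect_const continuous_intros)
  moreover have "stochastic_kernels Y Z \<subseteq> B"
  proof
    fix T assume T: "T \<in> stochastic_kernels Y Z"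
    have "T i \<in> (if i \<in> Y \<times> Z then {0..1} else {0})" for i
      using T stochastic_kernels_le_1[OF assms T] by (cases i) (auto simp: stochastic_kernels_def)
    then show "T \<in> B" by (simp add: B_def PiE_iff)
  qed
  ultimately show ?thesis
    by (metis compact_Int_closed inf.absorb_iff2)
qed

lemma kernel_output_outside:
  "T \<in> stochastic_kernels Y Z \<Longrightarrow> z \<notin> Z \<Longrightarrow> kernel_output Q Y T a z = 0"
  by (simp add: kernel_output_def stochastic_kernels_def)

lemma kernel_output_segment:
  "kernel_output Q Y (\<lambda>i. T i + t * (T' i - T i)) a z =
     kernel_output Q Y T a z + t * (kernel_output Q Y T' a z - kernel_output Q Y T a z)"
  by (simp add: kernel_output_def sum.distrib sum_subtractf sum_distrib_left algebra_simps)

lemma degraded_if_kernel_output: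
  assumes "finite Y" "output_support Q \<subseteq> Y" "finite Z" "T \<in> stochastic_kernels Y Z"
    and "\<And>a z. pmf (W a) z = kernel_output Q Y T a z"
  shows "degraded W Q"
proof -
  define U where "U y = (if y \<in> Y then embed_pmf (\<lambda>z. T (y, z)) else return_pmf undefined)" for y
  have pmf_U: "pmf (U y) z = T (y, z)" if "y \<in> Y" for y z
  proof -
    have "(\<integral>\<^sup>+z. ennreal (T (y, z)) \<partial>count_space UNIV) = (\<Sum>z\<in>Z. ennreal (T (y, z)))"
      using assms(3,4) by (intro nn_integral_count_space') (auto simp: stochastic_kernels_def)
    also have "\<dots> = 1"
      using assms(4) that by (simp add: stochastic_kernels_def sum_ennreal)
    finally show ?thesis
      using assms(4) that by (simp add: U_def pmf_embed_pmf stochastic_kernels_def)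
  qed
  have "pmf (bind_pmf (Q a) U) z = kernel_output Q Y T a z" for a z
    using assms(1) order.trans[OF set_pmf_subset_output_support assms(2)]
    by (simp add: pmf_bind_finite_support kernel_output_def pmf_U)
  then show ?thesis
    unfolding degraded_def using assms(5) by (metis pmf_eqI)
qed

lemma sum_payoff_kernel_output:
  "(\<Sum>z\<in>Z. \<Sum>a\<in>UNIV. c z a * kernel_output Q Y T a z) = (\<Sum>y\<in>Y. \<Sum>z\<in>Z. T (y, z) * payoff c z Q y)"
proof -
  have "(\<Sum>a\<in>UNIV. c z a * kernel_output Q Y T a z) = (\<Sum>y\<in>Y. T (y, z) * payoff c z Q y)" for z
    unfolding kernel_output_def payoff_def sum_distrib_left by (subst sum.swap) (simp add: mult_ac)
  then show ?thesis by (simp add: sum.swap[of _ Z Y])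
qed

lemma bayes_decision_rule:
  assumes "finite Z" "Z \<noteq> {}"
  obtains T where "T \<in> stochastic_kernels (output_support Q) Z"
    and "(\<Sum>z\<in>Z. \<Sum>a\<in>UNIV. c z a * kernel_output Q (output_support Q) T a z) = bayes_payoff c Z Q"
proof -
  have "\<exists>z. z \<in> Z \<and> payoff c z Q y = best_payoff c Z Q y" for y
  proof -
    have "best_payoff c Z Q y \<in> (\<lambda>z. payoff c z Q y) ` Z"
      unfolding best_payoff_def using assms by (intro Max_in) auto
    then obtain z where "z \<in> Z" "best_payoff c Z Q y = payoff c z Q y" by (rule imageE)
    then show ?thesis by auto
  qed
  then obtain f where f: "\<And>y. f y \<in> Z" "\<And>y. payoff c (f y) Q y = best_payoff c Z Q y"
    using choice[of "\<lambda>y z. z \<in> Z \<and> payoff c z Q y = best_payoff c Z Q y"] by auto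
  define T where "T = deterministic_kernel (output_support Q) f"
  have "(\<Sum>z\<in>Z. T (y, z) * payoff c z Q y) = best_payoff c Z Q y" if "y \<in> output_support Q" for y
  proof -
    have "(\<Sum>z\<in>Z. T (y, z) * payoff c z Q y) = (\<Sum>z\<in>Z. if z = f y then payoff c z Q y else 0)"
      using that by (intro sum.cong) (auto simp: T_def deterministic_kernel_def)
    also have "\<dots> = best_payoff c Z Q y"
      using f assms(1) by (simp add: sum.delta')
    finally show ?thesis .
  qed
  then have "(\<Sum>z\<in>Z. \<Sum>a\<in>UNIV. c z a * kernel_output Q (output_support Q) T a z) = bayes_payoff c Z Q"
    unfolding sum_payoff_kernel_output bayes_payoff_def by (rule sum.cong[OF refl])
  moreover have "T \<in> stochastic_kernels (output_support Q) Z"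
    unfolding T_def using f(1) assms(1) by (intro deterministic_kernel_in_stochastic_kernels) auto
  ultimately show ?thesis using that by blast
qed

lemma sum_mult_nonpos_if_sum_power2_minimal:
  fixes u v :: "'i \<Rightarrow> real"
  assumes "\<And>t. 0 < t \<Longrightarrow> t \<le> 1 \<Longrightarrow> (\<Sum>i\<in>I. (u i)\<^sup>2) \<le> (\<Sum>i\<in>I. (u i - t * v i)\<^sup>2)"
  shows "(\<Sum>i\<in>I. u i * v i) \<le> 0"
proof (rule ccontr)
  define P E where "P = (\<Sum>i\<in>I. u i * v i)" and "E = (\<Sum>i\<in>I. (v i)\<^sup>2)"
  assume "\<not> (\<Sum>i\<in>I. u i * v i) \<le> 0"
  then have "P > 0" by (simp add: P_def)
  have "E \<ge> 0" by (simp add: E_def sum_nonneg)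
  define t where "t = min 1 (P / (E + 1))"
  have t: "0 < t" "t \<le> 1" using \<open>P > 0\<close> \<open>E \<ge> 0\<close> by (auto simp: t_def)
  have "(\<Sum>i\<in>I. (u i - t * v i)\<^sup>2) = (\<Sum>i\<in>I. (u i)\<^sup>2) - 2 * t * P + t\<^sup>2 * E"
    by (simp add: P_def E_def power2_diff power_mult_distrib sum.distrib sum_subtractf
        sum_distrib_left algebra_simps)
  with assms[OF t] have "2 * P \<le> t * E"
    using t by (simp add: power2_eq_square)
  also have "t * E \<le> P / (E + 1) * E"
    using \<open>E \<ge> 0\<close> by (intro mult_right_mono) (auto simp: t_def)
  also have "\<dots> < 2 * P"
    using \<open>P > 0\<close> \<open>E \<ge> 0\<close> by (simp add: field_simps add_nonneg_pos)
  finally show False by simp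
qed

locale finite_channel_pair =
  fixes W :: "'w channel" and Q :: "'q channel"
  assumes bidmc_W: "bidmc W" and bidmc_Q: "bidmc Q"
begin

definition kernels :: "('q \<times> 'w \<Rightarrow> real) set" where
  "kernels = stochastic_kernels (output_support Q) (output_support W)"

definition residual :: "('q \<times> 'w \<Rightarrow> real) \<Rightarrow> 'w \<Rightarrow> bool \<Rightarrow> real" where
  "residual T z a = pmf (W a) z - kernel_output Q (output_support Q) T a z"

definition distance :: "('q \<times> 'w \<Rightarrow> real) \<Rightarrow> real" where
  "distance T = (\<Sum>(z, a)\<in>output_support W \<times> UNIV. (residual T z a)\<^sup>2)"

lemma finite_output_support_W: "finite (output_support W)"
  and finite_output_support_Q: "finite (output_support Q)"
  using bidmc_W bidmc_Q by (simp_all add: bidmc_iff_finite_output_support)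

lemma distance_nonneg: "0 \<le> distance T"
  unfolding distance_def by (intro sum_nonneg) auto

lemma distance_attains_min:
  obtains Ts where "Ts \<in> kernels" "\<And>T. T \<in> kernels \<Longrightarrow> distance Ts \<le> distance T"
proof -
  obtain w0 where "w0 \<in> output_support W" using output_support_nonempty[of W] by blast
  then have "deterministic_kernel (output_support Q) (\<lambda>_. w0) \<in> kernels"
    unfolding kernels_def using finite_output_support_W
    by (intro deterministic_kernel_in_stochastic_kernels) auto
  moreover have "continuous_on kernels distance"
    unfolding distance_def residual_def kernel_output_def case_prod_beta by (intro continuous_intros)
  ultimately show ?thesis
    using that continuous_attains_inf[OF compact_stochastic_kernels[OF finite_output_support_W]]
    unfolding kernels_def by blast
qed

lemma distance_min_first_order:
  assumes Ts: "Ts \<in> kernels" and min: "\<And>T. T \<in> kernels \<Longrightarrow> distance Ts \<le> distance T"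
    and T: "T \<in> kernels"
  shows "(\<Sum>(z, a)\<in>output_support W \<times> UNIV. residual Ts z a *
      (kernel_output Q (output_support Q) T a z - kernel_output Q (output_support Q) Ts a z)) \<le> 0"
proof -
  define v where "v z a = kernel_output Q (output_support Q) T a z
      - kernel_output Q (output_support Q) Ts a z" for z a
  have "distance Ts \<le> (\<Sum>(z, a)\<in>output_support W \<times> UNIV. (residual Ts z a - t * v z a)\<^sup>2)"
    if "0 < t" "t \<le> 1" for t
  proof -
    have "(\<lambda>i. Ts i + t * (T i - Ts i)) \<in> kernels"
      using Ts T that unfolding kernels_def by (intro stochastic_kernels_convex) auto
    moreover have "residual (\<lambda>i. Ts i + t * (T i - Ts i)) z a = residual Ts z a - t * v z a" for z a
      unfolding residual_def v_def kernel_output_segment by simp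
    ultimately show ?thesis
      using min unfolding distance_def by fastforce
  qed
  then show ?thesis
    using sum_mult_nonpos_if_sum_power2_minimal[where I = "output_support W \<times> UNIV"
        and u = "\<lambda>(z, a). residual Ts z a" and v = "\<lambda>(z, a). v z a"]
    unfolding distance_def v_def by (simp add: case_prod_beta)
qed

lemma degraded_if_distance_eq_0:
  assumes "Ts \<in> kernels" "distance Ts = 0"
  shows "degraded W Q"
proof -
  have "pmf (W a) z = kernel_output Q (output_support Q) Ts a z" for a z
  proof (cases "z \<in> output_support W")
    case True
    then show ?thesis
      using assms(2) finite_output_support_W unfolding distance_def
      by (subst (asm) sum_nonneg_eq_0_iff) (auto simp: residual_def)
  next
    case False
    then show ?thesis
      using assms(1) unfolding kernels_def
      by (simp add: kernel_output_outside pmf_outside_output_support)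
  qed
  then show ?thesis
    using finite_output_support_W finite_output_support_Q assms(1) unfolding kernels_def
    by (intro degraded_if_kernel_output) auto
qed

lemma bayes_payoff_residual_less:
  assumes Ts: "Ts \<in> kernels" and min: "\<And>T. T \<in> kernels \<Longrightarrow> distance Ts \<le> distance T"
    and "distance Ts \<noteq> 0"
  shows "bayes_payoff (residual Ts) (output_support W) Q
    < bayes_payoff (residual Ts) (output_support W) W"
proof -
  let ?out = "kernel_output Q (output_support Q)"
  obtain Tb where "Tb \<in> kernels"
    and Tb: "(\<Sum>z\<in>output_support W. \<Sum>a\<in>UNIV. residual Ts z a * ?out Tb a z) =
      bayes_payoff (residual Ts) (output_support W) Q"
    using bayes_decision_rule[OF finite_output_support_W output_support_nonempty,
        where c = "residual Ts" and Q = Q]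
    unfolding kernels_def by blast
  have "bayes_payoff (residual Ts) (output_support W) Q
      \<le> (\<Sum>z\<in>output_support W. \<Sum>a\<in>UNIV. residual Ts z a * ?out Ts a z)"
    using distance_min_first_order[OF Ts min \<open>Tb \<in> kernels\<close>] unfolding Tb[symmetric]
    by (simp add: sum.cartesian_product case_prod_beta algebra_simps sum_subtractf)
  also have "\<dots> < (\<Sum>z\<in>output_support W. \<Sum>a\<in>UNIV. residual Ts z a * ?out Ts a z) + distance Ts"
    using distance_nonneg[of Ts] assms(3) by simp
  also have "\<dots> = (\<Sum>z\<in>output_support W. payoff (residual Ts) z W z)"
    unfolding distance_def payoff_def sum.cartesian_product[symmetric]
    by (simp add: sum.distrib[symmetric] residual_def power2_eq_square algebra_simps)
  also have "\<dots> \<le> bayes_payoff (residual Ts) (output_support W) W"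
    unfolding bayes_payoff_def using finite_output_support_W by (intro sum_mono best_payoff_ge)
  finally show ?thesis .
qed

theorem degraded_if_bayes_payoff_le:
  assumes "\<And>c :: 'w \<Rightarrow> bool \<Rightarrow> real.
      bayes_payoff c (output_support W) W \<le> bayes_payoff c (output_support W) Q"
  shows "degraded W Q"
proof -
  obtain Ts where "Ts \<in> kernels" "\<And>T. T \<in> kernels \<Longrightarrow> distance Ts \<le> distance T"
    using distance_attains_min by blast
  then show ?thesis
    using degraded_if_distance_eq_0 bayes_payoff_residual_less assms by (meson not_le)
qed

end

theorem corollary2:
  fixes R :: "'r channel" and W :: "'w channel" and Q :: "'q channel" and p :: real
  assumes "bidmc R" "bidmc W" "bidmc Q"
    and "symmetric_channel R" "symmetric_channel W" "symmetric_channel Q"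
    and "0 < p" "p < 1"
    and "degraded (switch_channel p R W) (switch_channel p R Q)"
  shows "degraded W Q"
proof -
  have "bayes_payoff c (output_support W) W \<le> bayes_payoff c (output_support W) Q"
    for c :: "'w \<Rightarrow> bool \<Rightarrow> real"
  proof -
    let ?Z = "output_support W"
    have Z: "finite ?Z" "?Z \<noteq> {}"
      using assms(2) by (simp_all add: bidmc_iff_finite_output_support output_support_nonempty)
    have "bayes_payoff c ?Z (switch_channel p R W) \<le> bayes_payoff c ?Z (switch_channel p R Q)"
      using assms(1-3,9) Z by (intro bayes_payoff_degraded bidmc_switch_channel)
    then show ?thesis
      using assms(1-3,7,8) Z by (simp add: bayes_payoff_switch_channel)
  qed
  then show ?thesis
    by (rule finite_channel_pair.degraded_if_bayes_payoff_le[OF finite_channel_pair.intro[OF assms(2,3)]])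
qed

end
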